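(* Let $G_{\|v_0}$ be an initialized mean-payoff game, let $i\in\Pi$, and let $\lambda$ be a requirement with either $\lambda(V)\subseteq\mathbb{R}$ or $\lambda=\lambda_0$. Then $$\inf_{\tau_\mathbb{P}}\ \sup_{\tau_\mathbb{C}}\ \nu_\mathbb{C}\big(\langle\tau_\mathbb{P},\tau_\mathbb{C}\rangle_{s_0}\big)=\inf_{\bar\sigma_{-i}\in\lambda\mathrm{Rat}_i(v_0)}\ \sup_{\sigma_i}\ \mu_i\big(\langle\bar\sigma_{-i},\sigma_i\rangle_{v_0}\big),$$ where the left-hand side is the value $\mathrm{val}_\mathbb{C}(\mathrm{Conc}_{\lambda i}(G)_{\|s_0})$ of the concrete negotiation game.
   Context: A game is a tuple $G=(\Pi,V,(V_i)_{i\in\Pi},E,\mu)$ with $\Pi$ a finite set of players, $(V,E)$ a finite directed graph in which every vertex has an outgoing edge, $(V_i)_i$ a partition of $V$, and $\mu:V^\omega\to\mathbb{R}^\Pi$. Plays, histories, strategies, profiles, compatibility, $\langle\bar\sigma\rangle_v$ and $\bar\sigma_{\|hw}$ ($\sigma_{j\|hw}(h')=\sigma_j(hh')$) are as usual; $-i=\Pi\setminus\{i\}$. A mean-payoff game is a game where $\mu$ is given by a weight function $\pi:E\to\mathbb{Q}^\Pi$ via $\mu_j(\rho)=\liminf_{n\to\infty}\frac1n\sum_{k=0}^{n-1}\pi_j(\rho_k\rho_{k+1})$. A requirement is a map $\lambda:V\to\mathbb{R}\cup\{\pm\infty\}$; $\lambda_0$ is constantly $-\infty$. A play $\rho$ is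 $\lambda$-consistent if for every $j\in\Pi$ and $n$ with $\rho_n\in V_j$, $\mu_j(\rho_n\rho_{n+1}\cdots)\ge\lambda(\rho_n)$. $\lambda\mathrm{Rat}_i(v)$ is the set of profiles $\bar\sigma_{-i}$ in $G_{\|v}$ for which there exists $\sigma_i$ such that for every history $hw$ from $v$ compatible with $\bar\sigma_{-i}$, $\langle\bar\sigma_{\|hw}\rangle_w$ is $\lambda$-consistent; $\inf\emptyset=+\infty$. The concrete negotiation game $\mathrm{Conc}_{\lambda i}(G)_{\|s_0}$ is the two-player zero-sum game between Prover $\mathbb{P}$ and Challenger $\mathbb{C}$ with Prover states $S_\mathbb{P}=V\times2^V$, Challenger states $S_\mathbb{C}=E\times2^V$, initial state $s_0=(v_0,\{v_0\})$, and transitions: proposals $(v,M)\to(vw,M)$ for $vw\in E$; acceptations $(vw,M)\to(w,M\cup\{w\})$; deviations $(uv,M)\to(w,\{w\})$ whenever $u\in V_i$, $uw\in E$, $w\neq v$. The weight function $\hat\pi$ has coordinates indexed by $\Pi\cup\{\star\}$: on proposals all coordinates are $0$; on an acceptation or deviation $(uv,M)\to(w,N)$, $\hat\pi_\star=2\pi_i(uw)$ and, for $j\in\Pi$, $\hat\pi_j=2\big(\pi_j(uw)-\max_{x\in M\cap V_j}\lambda(x)\big)$, with the convention that $\hat\pi_j=0$ when $M\cap V_j=\emptyset$ or this maximum is $-\infty$. For each coordinate $d$, $\hat\mu_d(\eta)=\liminf_n\frac1n\sum_{k<n}\hat\pi_d(\eta_k\eta_{k+1})$. Challenger's outcome is $\nu_\mathbb{C}(\eta)=+\infty$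 if $\eta$ contains only finitely many deviations and $\hat\mu_j(\eta)<0$ for some $j\in\Pi$, and $\nu_\mathbb{C}(\eta)=\hat\mu_\star(\eta)$ otherwise; $\nu_\mathbb{P}=-\nu_\mathbb{C}$. $\langle\tau_\mathbb{P},\tau_\mathbb{C}\rangle_{s_0}$ is the play generated by strategies of Prover and Challenger. The game is determined, so $\mathrm{val}_\mathbb{C}=\inf_{\tau_\mathbb{P}}\sup_{\tau_\mathbb{C}}\nu_\mathbb{C}=\sup_{\tau_\mathbb{C}}\inf_{\tau_\mathbb{P}}\nu_\mathbb{C}$. *)

theory Defs
  imports Complex_Main "HOL-Library.Extended_Real"
begin

(* A game: vertex type 'v (finite, V = UNIV), player type 'p (finite, Pi = UNIV),
   edge relation E, owner function own (V_j = {v. own v = j}),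
   weight function wt j u w = pi_j(uw). *)

definition is_strategy :: "('v \<times> 'v) set \<Rightarrow> ('v \<Rightarrow> 'p) \<Rightarrow> 'p \<Rightarrow> ('v list \<Rightarrow> 'v) \<Rightarrow> bool" where
  "is_strategy E own j \<sigma> \<longleftrightarrow> (\<forall>h. h \<noteq> [] \<and> own (last h) = j \<longrightarrow> (last h, \<sigma> h) \<in> E)"

fun hist :: "('v \<Rightarrow> 'p) \<Rightarrow> ('p \<Rightarrow> 'v list \<Rightarrow> 'v) \<Rightarrow> 'v \<Rightarrow> nat \<Rightarrow> 'v list" where
  "hist own \<sigma> v 0 = [v]"
| "hist own \<sigma> v (Suc n) = (let h = hist own \<sigma> v n in h @ [\<sigma> (own (last h)) h])"

definition outcome :: "('v \<Rightarrow> 'p) \<Rightarrow> ('p \<Rightarrow> 'v list \<Rightarrow> 'v) \<Rightarrow> 'v \<Rightarrow> nat \<Rightarrow> 'v" where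
  "outcome own \<sigma> v = (\<lambda>n. last (hist own \<sigma> v n))"

definition mean_payoff :: "('a \<Rightarrow> 'a \<Rightarrow> real) \<Rightarrow> (nat \<Rightarrow> 'a) \<Rightarrow> ereal" where
  "mean_payoff w \<rho> = liminf (\<lambda>n. ereal ((\<Sum>k<n. w (\<rho> k) (\<rho> (Suc k))) / real n))"

definition lam_consistent :: "('v \<Rightarrow> 'p) \<Rightarrow> ('p \<Rightarrow> 'v \<Rightarrow> 'v \<Rightarrow> real) \<Rightarrow> ('v \<Rightarrow> ereal) \<Rightarrow> (nat \<Rightarrow> 'v) \<Rightarrow> bool" where
  "lam_consistent own wt lam \<rho> \<longleftrightarrow>
     (\<forall>n. mean_payoff (wt (own (\<rho> n))) (\<lambda>k. \<rho> (n + k)) \<ge> lam (\<rho> n))"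

definition is_history :: "('v \<times> 'v) set \<Rightarrow> 'v \<Rightarrow> 'v list \<Rightarrow> bool" where
  "is_history E v h \<longleftrightarrow> h \<noteq> [] \<and> hd h = v \<and> (\<forall>k. Suc k < length h \<longrightarrow> (h ! k, h ! Suc k) \<in> E)"

definition compatible_minus :: "('v \<Rightarrow> 'p) \<Rightarrow> 'p \<Rightarrow> ('p \<Rightarrow> 'v list \<Rightarrow> 'v) \<Rightarrow> 'v list \<Rightarrow> bool" where
  "compatible_minus own i \<sigma> h \<longleftrightarrow>
     (\<forall>k. Suc k < length h \<and> own (h ! k) \<noteq> i \<longrightarrow> h ! Suc k = \<sigma> (own (h ! k)) (take (Suc k) h))"

(* \<lambda>Rat_i(v): profiles \<sigma>_{-i} (represented as full profiles whose i-th component is ignored) *)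
definition lamRat :: "('v \<times> 'v) set \<Rightarrow> ('v \<Rightarrow> 'p) \<Rightarrow> ('p \<Rightarrow> 'v \<Rightarrow> 'v \<Rightarrow> real) \<Rightarrow> ('v \<Rightarrow> ereal)
      \<Rightarrow> 'p \<Rightarrow> 'v \<Rightarrow> ('p \<Rightarrow> 'v list \<Rightarrow> 'v) set" where
  "lamRat E own wt lam i v = {\<sigma>. (\<forall>j. j \<noteq> i \<longrightarrow> is_strategy E own j (\<sigma> j)) \<and>
     (\<exists>\<tau>. is_strategy E own i \<tau> \<and>
        (\<forall>h w. is_history E v (h @ [w]) \<and> compatible_minus own i \<sigma> (h @ [w]) \<longrightarrow>
           lam_consistent own wt lam (outcome own (\<lambda>j h'. (\<sigma>(i := \<tau>)) j (h @ h')) w)))}"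

datatype 'v cstate = PSt 'v "'v set" | CSt 'v 'v "'v set"

fun is_P :: "'v cstate \<Rightarrow> bool" where
  "is_P (PSt _ _) = True"
| "is_P (CSt _ _ _) = False"

fun ctrans :: "('v \<times> 'v) set \<Rightarrow> ('v \<Rightarrow> 'p) \<Rightarrow> 'p \<Rightarrow> 'v cstate \<Rightarrow> 'v cstate \<Rightarrow> bool" where
  "ctrans E own i (PSt v M) s' = (\<exists>w. (v, w) \<in> E \<and> s' = CSt v w M)"
| "ctrans E own i (CSt u v M) s' =
     (s' = PSt v (M \<union> {v}) \<or> (\<exists>w. own u = i \<and> (u, w) \<in> E \<and> w \<noteq> v \<and> s' = PSt w {w}))"

fun is_dev :: "'v cstate \<Rightarrow> 'v cstate \<Rightarrow> bool" where
  "is_dev (CSt u v M) (PSt w N) = (w \<noteq> v)"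
| "is_dev _ _ = False"

(* coordinate None is \<star>, Some j is player j *)
fun hatwt :: "('v \<Rightarrow> 'p) \<Rightarrow> ('p \<Rightarrow> 'v \<Rightarrow> 'v \<Rightarrow> real) \<Rightarrow> ('v \<Rightarrow> ereal) \<Rightarrow> 'p
      \<Rightarrow> 'p option \<Rightarrow> 'v cstate \<Rightarrow> 'v cstate \<Rightarrow> real" where
  "hatwt own wt lam i None (CSt u v M) (PSt w N) = 2 * wt i u w"
| "hatwt own wt lam i (Some j) (CSt u v M) (PSt w N) =
     (let X = M \<inter> {x. own x = j} in
      if X = {} \<or> Max (lam ` X) = -\<infinity> then 0
      else 2 * (wt j u w - real_of_ereal (Max (lam ` X))))"
| "hatwt own wt lam i d _ _ = 0"

definition nuC :: "('v \<Rightarrow> 'p) \<Rightarrow> ('p \<Rightarrow> 'v \<Rightarrow> 'v \<Rightarrow> real) \<Rightarrow> ('v \<Rightarrow> ereal) \<Rightarrow> 'p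
      \<Rightarrow> (nat \<Rightarrow> 'v cstate) \<Rightarrow> ereal" where
  "nuC own wt lam i \<eta> =
     (if finite {k. is_dev (\<eta> k) (\<eta> (Suc k))} \<and>
         (\<exists>j. mean_payoff (hatwt own wt lam i (Some j)) \<eta> < 0)
      then \<infinity> else mean_payoff (hatwt own wt lam i None) \<eta>)"

definition prover_strategy :: "('v \<times> 'v) set \<Rightarrow> ('v \<Rightarrow> 'p) \<Rightarrow> 'p \<Rightarrow> ('v cstate list \<Rightarrow> 'v cstate) \<Rightarrow> bool" where
  "prover_strategy E own i \<tau> \<longleftrightarrow> (\<forall>h. h \<noteq> [] \<and> is_P (last h) \<longrightarrow> ctrans E own i (last h) (\<tau> h))"

definition challenger_strategy :: "('v \<times> 'v) set \<Rightarrow> ('v \<Rightarrow> 'p) \<Rightarrow> 'p \<Rightarrow> ('v cstate list \<Rightarrow> 'v cstate) \<Rightarrow> bool" where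
  "challenger_strategy E own i \<tau> \<longleftrightarrow> (\<forall>h. h \<noteq> [] \<and> \<not> is_P (last h) \<longrightarrow> ctrans E own i (last h) (\<tau> h))"

fun chist :: "('v cstate list \<Rightarrow> 'v cstate) \<Rightarrow> ('v cstate list \<Rightarrow> 'v cstate) \<Rightarrow> 'v cstate \<Rightarrow> nat \<Rightarrow> 'v cstate list" where
  "chist tP tC s 0 = [s]"
| "chist tP tC s (Suc n) = (let h = chist tP tC s n in h @ [if is_P (last h) then tP h else tC h])"

definition coutcome :: "('v cstate list \<Rightarrow> 'v cstate) \<Rightarrow> ('v cstate list \<Rightarrow> 'v cstate) \<Rightarrow> 'v cstate \<Rightarrow> nat \<Rightarrow> 'v cstate" where
  "coutcome tP tC s = (\<lambda>n. last (chist tP tC s n))"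

end

theory Submission
  imports Defs "HOL-Analysis.Analysis"
begin

(* A Prover strategy is the same thing as a strategy profile (Prover proposes the move the profile
   prescribes), and a Challenger strategy is the same thing as a strategy of player i (Challenger
   accepts a proposal unless player i moves elsewhere). Along a play of the negotiation game only
   every second step carries weight, and that weight is doubled, so the star coordinate is the
   mean payoff of player i along the underlying play rho. If deviations stop, the memory eventually
   consists of the vertices visited since the last deviation, so the j-coordinate is the mean payoff
   of player j minus the largest requirement of a j-vertex visited since then: Challenger's outcome
   is +infinity exactly when rho is not lambda-consistent after the last deviation. Hence a
   lambda-rational profile gives Prover a strategy holding Challenger to the right-hand side, and a
   Prover strategy whose profile is not lambda-rational lets Challenger reach an inconsistent
   history and win +infinity. *)

section \<open>Cesaro averages\<close>

definition liminf_avg :: "(nat \<Rightarrow> real) \<Rightarrow> ereal" where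
  "liminf_avg a = liminf (\<lambda>n. ereal ((\<Sum>k<n. a k) / real n))"

lemma mean_payoff_eq_liminf_avg: "mean_payoff w \<rho> = liminf_avg (\<lambda>k. w (\<rho> k) (\<rho> (Suc k)))"
  by (simp add: mean_payoff_def liminf_avg_def)

lemma liminf_ereal_eq_if_diff_tendsto_zero:
  fixes x z :: "nat \<Rightarrow> real"
  assumes "(\<lambda>n. x n - z n) \<longlonglongrightarrow> 0"
  shows "liminf (\<lambda>n. ereal (x n)) = liminf (\<lambda>n. ereal (z n))"
proof -
  have "(\<lambda>n. ereal (x n - z n)) \<longlonglongrightarrow> ereal 0"
    using assms by (simp add: tendsto_ereal)
  then have "liminf (\<lambda>n. ereal (x n - z n) + ereal (z n)) = ereal 0 + liminf (\<lambda>n. ereal (z n))"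
    by (rule ereal_liminf_lim_add) simp
  then show ?thesis by simp
qed

lemma tendsto_zero_if_abs_le_const_over_n:
  fixes x :: "nat \<Rightarrow> real"
  assumes "\<And>n. n \<ge> 1 \<Longrightarrow> \<bar>x n\<bar> \<le> C / real n"
  shows "x \<longlonglongrightarrow> 0"
  by (rule Lim_null_comparison[OF _ lim_const_over_n[of C]])
    (use assms in \<open>auto simp: eventually_sequentially intro!: exI[of _ 1]\<close>)

lemma liminf_comp_div2: "liminf (\<lambda>m. f (m div 2)) = liminf (f :: nat \<Rightarrow> 'a::complete_linorder)"
proof (rule antisym)
  have "strict_mono (\<lambda>n::nat. 2 * n)" by (auto simp: strict_mono_def)
  from liminf_subseq_mono[OF this, of "\<lambda>m. f (m div 2)"]
  show "liminf (\<lambda>m. f (m div 2)) \<le> liminf f" by (simp add: o_def)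
next
  show "liminf f \<le> liminf (\<lambda>m. f (m div 2))"
    unfolding le_Liminf_iff
  proof (intro allI impI)
    fix y assume "y < liminf f"
    then have "\<forall>\<^sub>F n in sequentially. y < f n" by (rule less_LiminfD)
    then obtain N where N: "\<And>n. n \<ge> N \<Longrightarrow> y < f n" by (auto simp: eventually_sequentially)
    show "\<forall>\<^sub>F m in sequentially. y < f (m div 2)"
      unfolding eventually_sequentially by (rule exI[of _ "2*N"]) (auto intro!: N)
  qed
qed

lemma abs_sum_lessThan_le:
  fixes a :: "nat \<Rightarrow> real"
  assumes "\<And>n. \<bar>a n\<bar> \<le> B"
  shows "\<bar>\<Sum>k<n. a k\<bar> \<le> B * real n"
proof -
  have "\<bar>\<Sum>k<n. a k\<bar> \<le> (\<Sum>k<n. \<bar>a k\<bar>)" by (rule sum_abs)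
  also have "\<dots> \<le> (\<Sum>k<n. B)" by (rule sum_mono) (rule assms)
  finally show ?thesis by (simp add: mult.commute)
qed

lemma liminf_avg_interleave_zeros:
  fixes a b :: "nat \<Rightarrow> real"
  assumes even: "\<And>n. b (2*n) = 0" and odd: "\<And>n. b (Suc (2*n)) = 2 * a n"
    and bounded: "\<And>n. \<bar>a n\<bar> \<le> B"
  shows "liminf_avg b = liminf_avg a"
proof -
  define S where "S n = (\<Sum>k<n. a k)" for n
  have sum_even: "(\<Sum>k<2*n. b k) = 2 * S n" for n
    by (induction n) (auto simp: S_def even odd)
  have sum_odd: "(\<Sum>k<Suc (2*n). b k) = 2 * S n" for n
    using sum_even[of n] by (simp add: even)
  have S_bound: "\<bar>S n\<bar> \<le> B * real n" for n
    unfolding S_def by (rule abs_sum_lessThan_le[OF bounded])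
  have "B \<ge> 0" using bounded[of 0] by linarith
  define x where "x m = (\<Sum>k<m. b k) / real m" for m
  define z where "z m = S (m div 2) / real (m div 2)" for m
  have "(\<lambda>m. x m - z m) \<longlonglongrightarrow> 0"
  proof (rule tendsto_zero_if_abs_le_const_over_n)
    fix m :: nat assume "m \<ge> 1"
    define n where "n = m div 2"
    have "m = 2*n \<or> m = Suc (2*n)" unfolding n_def by presburger
    then consider "m = 2*n" | "m = Suc (2*n)" "n = 0" | "m = Suc (2*n)" "n > 0" by blast
    then show "\<bar>x m - z m\<bar> \<le> B / real m"
    proof cases
      case 1
      then show ?thesis using \<open>B \<ge> 0\<close> by (simp add: x_def z_def sum_even)
    next
      case 2
      then show ?thesis using \<open>B \<ge> 0\<close> even[of 0] by (simp add: x_def z_def S_def)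
    next
      case 3
      have "x m = 2 * S n / m" "z m = S n / n"
        using 3 sum_odd[of n] by (simp_all add: x_def z_def del: sum.lessThan_Suc)
      then have "x m - z m = 2 * S n / m - S n / n" by simp
      also have "\<dots> = - S n / (n * m)" using 3 by (simp add: field_simps)
      finally have "\<bar>x m - z m\<bar> = \<bar>S n\<bar> / (n * m)" by simp
      also have "\<dots> \<le> B * n / (n * m)"
        by (rule divide_right_mono[OF S_bound]) simp
      also have "\<dots> = B / m" using \<open>n > 0\<close> by simp
      finally show ?thesis .
    qed
  qed
  then have "liminf (\<lambda>m. ereal (x m)) = liminf (\<lambda>m. ereal (z m))"
    by (rule liminf_ereal_eq_if_diff_tendsto_zero)
  also have "\<dots> = liminf (\<lambda>n. ereal (S n / real n))"
    using liminf_comp_div2[of "\<lambda>n. ereal (S n / real n)"] by (simp add: z_def)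
  finally show ?thesis by (simp add: liminf_avg_def x_def S_def)
qed

lemma liminf_avg_shift:
  fixes a :: "nat \<Rightarrow> real"
  assumes bounded: "\<And>n. \<bar>a n\<bar> \<le> B"
  shows "liminf_avg (\<lambda>k. a (m + k)) = liminf_avg a"
proof -
  define S where "S n = (\<Sum>k<n. a k)" for n
  have S_bound: "\<bar>S n\<bar> \<le> B * real n" for n
    unfolding S_def by (rule abs_sum_lessThan_le[OF bounded])
  have sum_shift: "(\<Sum>k<n. a (m + k)) = S (n + m) - S m" for n
  proof -
    have "S (m + n) = S m + (\<Sum>k<n. a (m + k))" unfolding S_def
      by (induction n) auto
    then show ?thesis by (simp add: add.commute)
  qed
  define x where "x n = (S (n + m) - S m) / real n" for n
  define z where "z n = S (n + m) / real (n + m)" for n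
  have "(\<lambda>n. x n - z n) \<longlonglongrightarrow> 0"
  proof (rule tendsto_zero_if_abs_le_const_over_n)
    fix n :: nat assume "n \<ge> 1"
    have "x n - z n = S (n+m) * (1 / n - 1 / (n+m)) - S m / n"
      by (simp add: x_def z_def diff_divide_distrib algebra_simps)
    also have "1 / real n - 1 / (n+m) = m / (n * (n+m))"
      using \<open>n \<ge> 1\<close> by (simp add: field_simps)
    finally have "x n - z n = S (n+m) * m / (n * (n+m)) - S m / n" by simp
    then have "\<bar>x n - z n\<bar> \<le> \<bar>S (n+m) * m / (n * (n+m))\<bar> + \<bar>S m / n\<bar>"
      by (simp only: abs_triangle_ineq4)
    also have "\<dots> = \<bar>S (n+m)\<bar> * m / (n * (n+m)) + \<bar>S m\<bar> / n"
      by (simp add: abs_mult)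
    also have "\<dots> \<le> B * (n+m) * m / (n * (n+m)) + B * m / n"
      by (intro add_mono divide_right_mono mult_right_mono) (use S_bound[of "n+m"] S_bound[of m] in auto)
    also have "\<dots> = (2 * B * m) / n"
      using \<open>n \<ge> 1\<close> by (simp add: divide_simps)
    finally show "\<bar>x n - z n\<bar> \<le> (2 * B * m) / n" .
  qed
  then have "liminf (\<lambda>n. ereal (x n)) = liminf (\<lambda>n. ereal (z n))"
    by (rule liminf_ereal_eq_if_diff_tendsto_zero)
  also have "\<dots> = liminf (\<lambda>n. ereal (S n / real n))"
    unfolding z_def using liminf_shift_k[of "\<lambda>n. ereal (S n / real n)" m] by simp
  finally show ?thesis by (simp add: liminf_avg_def x_def S_def sum_shift)
qed

lemma liminf_avg_eventually_cong:
  fixes a b :: "nat \<Rightarrow> real"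
  assumes "\<And>n. \<bar>a n\<bar> \<le> B" "\<And>n. \<bar>b n\<bar> \<le> B" "\<And>n. n \<ge> N \<Longrightarrow> a n = b n"
  shows "liminf_avg a = liminf_avg b"
proof -
  have "liminf_avg a = liminf_avg (\<lambda>k. a (N + k))" using liminf_avg_shift assms(1) by metis
  also have "\<dots> = liminf_avg (\<lambda>k. b (N + k))" using assms(3) by simp
  also have "\<dots> = liminf_avg b" using liminf_avg_shift assms(2) by metis
  finally show ?thesis .
qed

lemma liminf_avg_zero: "liminf_avg (\<lambda>n. 0) = 0"
  by (simp add: liminf_avg_def Liminf_const zero_ereal_def)

lemma liminf_avg_diff_const: "liminf_avg (\<lambda>n. a n - c) = liminf_avg a - ereal c"
proof -
  have "\<forall>\<^sub>F n in sequentially.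
      ereal ((\<Sum>k<n. a k - c) / real n) = ereal ((\<Sum>k<n. a k) / real n) + ereal (- c)"
    unfolding eventually_sequentially
    by (rule exI[of _ 1]) (auto simp: sum_subtractf diff_divide_distrib)
  then have "liminf_avg (\<lambda>n. a n - c) = liminf (\<lambda>n. ereal ((\<Sum>k<n. a k) / real n) + ereal (- c))"
    unfolding liminf_avg_def by (rule Liminf_eq)
  also have "\<dots> = liminf_avg a + ereal (- c)"
    unfolding liminf_avg_def by (rule Liminf_add_ereal_right) auto
  finally show ?thesis by (simp add: minus_ereal_def)
qed

lemma mean_payoff_shift:
  assumes "\<And>u w. \<bar>w' u w\<bar> \<le> B"
  shows "mean_payoff w' (\<lambda>k. \<rho> (m + k)) = mean_payoff w' \<rho>"
  unfolding mean_payoff_eq_liminf_avg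
  using liminf_avg_shift[of "\<lambda>k. w' (\<rho> k) (\<rho> (Suc k))" B m] assms by simp

section \<open>Plays of the game\<close>

lemma hist_eq_map_outcome: "hist own \<sigma> v n = map (outcome own \<sigma> v) [0..<Suc n]"
proof (induction n)
  case (Suc n)
  have "hist own \<sigma> v (Suc n) = hist own \<sigma> v n @ [outcome own \<sigma> v (Suc n)]"
    by (simp add: outcome_def Let_def)
  then show ?case using Suc by simp
qed (simp add: outcome_def)

lemma outcome_0: "outcome own \<sigma> v 0 = v"
  by (simp add: outcome_def)

lemma outcome_Suc:
  "outcome own \<sigma> v (Suc n) = \<sigma> (own (outcome own \<sigma> v n)) (map (outcome own \<sigma> v) [0..<Suc n])"
  using hist_eq_map_outcome[of own \<sigma> v n] by (simp add: outcome_def Let_def del: upt_Suc)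

lemma outcome_eqI:
  assumes "\<rho> 0 = v" "\<And>n. \<rho> (Suc n) = \<sigma> (own (\<rho> n)) (map \<rho> [0..<Suc n])"
  shows "outcome own \<sigma> v = \<rho>"
proof -
  have "hist own \<sigma> v n = map \<rho> [0..<Suc n]" for n
    by (induction n) (simp_all add: assms Let_def)
  then show ?thesis by (auto simp: outcome_def)
qed

lemma outcome_suffix:
  assumes "\<And>n. n \<ge> N \<Longrightarrow> \<rho> (Suc n) = \<sigma> (own (\<rho> n)) (map \<rho> [0..<Suc n])"
  shows "outcome own (\<lambda>j h. \<sigma> j (map \<rho> [0..<N] @ h)) (\<rho> N) = (\<lambda>k. \<rho> (N + k))"
proof (rule outcome_eqI)
  fix n
  have "map \<rho> [0..<N] @ map (\<lambda>k. \<rho> (N + k)) [0..<Suc n] = map \<rho> [0..<Suc (N + n)]"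
    by (induction n) simp_all
  then show "\<rho> (N + Suc n) = \<sigma> (own (\<rho> (N + n))) (map \<rho> [0..<N] @ map (\<lambda>k. \<rho> (N + k)) [0..<Suc n])"
    using assms[of "N + n"] by (simp del: upt_Suc)
qed simp

lemma is_history_map:
  assumes "\<rho> 0 = v" "\<And>n. (\<rho> n, \<rho> (Suc n)) \<in> E"
  shows "is_history E v (map \<rho> [0..<Suc N])"
  using assms by (simp add: is_history_def hd_map del: upt_Suc)

lemma compatible_minus_map:
  assumes "\<And>n. own (\<rho> n) \<noteq> i \<Longrightarrow> \<rho> (Suc n) = \<sigma> (own (\<rho> n)) (map \<rho> [0..<Suc n])"
  shows "compatible_minus own i \<sigma> (map \<rho> [0..<Suc N])"
  unfolding compatible_minus_def
proof (intro allI impI)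
  fix k assume k: "Suc k < length (map \<rho> [0..<Suc N]) \<and> own (map \<rho> [0..<Suc N] ! k) \<noteq> i"
  then have "take (Suc k) (map \<rho> [0..<Suc N]) = map \<rho> [0..<Suc k]"
    "map \<rho> [0..<Suc N] ! k = \<rho> k" "map \<rho> [0..<Suc N] ! Suc k = \<rho> (Suc k)"
    by (simp_all add: take_map take_upt nth_map nth_upt del: upt_Suc)
  then show "map \<rho> [0..<Suc N] ! Suc k = \<sigma> (own (map \<rho> [0..<Suc N] ! k)) (take (Suc k) (map \<rho> [0..<Suc N]))"
    using k assms[of k] by (simp del: upt_Suc)
qed

lemma strategy_realising_play:
  assumes "\<rho> 0 = v" "\<And>n. (\<rho> n, \<rho> (Suc n)) \<in> E"
    and "\<And>n. own (\<rho> n) \<noteq> i \<Longrightarrow> \<rho> (Suc n) = \<sigma> (own (\<rho> n)) (map \<rho> [0..<Suc n])"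
    and "is_strategy E own i \<tau>0"
  obtains \<tau> where "is_strategy E own i \<tau>" "outcome own (\<sigma>(i := \<tau>)) v = \<rho>"
proof
  define \<tau> where "\<tau> h = (if h = map \<rho> [0..<length h] then \<rho> (length h) else \<tau>0 h)" for h
  show "is_strategy E own i \<tau>"
    unfolding is_strategy_def
  proof (intro allI impI)
    fix h assume h: "h \<noteq> [] \<and> own (last h) = i"
    show "(last h, \<tau> h) \<in> E"
    proof (cases "h = map \<rho> [0..<length h]")
      case True
      then obtain k where k: "length h = Suc k" using h by (cases "length h") auto
      then have "h = map \<rho> [0..<Suc k]" using True by simp
      then have "last h = \<rho> k" by simp
      then show ?thesis using True k assms(2)[of k] by (simp add: \<tau>_def)
    next
      case False
      then show ?thesis using assms(4) h by (simp add: \<tau>_def is_strategy_def)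
    qed
  qed
  show "outcome own (\<sigma>(i := \<tau>)) v = \<rho>"
  proof (rule outcome_eqI)
    fix n
    show "\<rho> (Suc n) = (\<sigma>(i := \<tau>)) (own (\<rho> n)) (map \<rho> [0..<Suc n])"
      using assms(3)[of n] by (cases "own (\<rho> n) = i") (simp_all add: \<tau>_def del: upt_Suc)
  qed (rule assms(1))
qed

lemma strategy_following_history:
  assumes hist: "is_history E v hw" and comp: "compatible_minus own i \<sigma> hw"
    and str: "is_strategy E own i \<tau>0"
  obtains \<tau> where "is_strategy E own i \<tau>" "\<And>h. length hw \<le> length h \<Longrightarrow> \<tau> h = \<tau>0 h"
    "map (outcome own (\<sigma>(i := \<tau>)) v) [0..<length hw] = hw"
proof
  define \<tau> where "\<tau> h = (if length h < length hw \<and> h = take (length h) hw then hw ! length h else \<tau>0 h)"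
    for h
  show "is_strategy E own i \<tau>"
    unfolding is_strategy_def
  proof (intro allI impI)
    fix h :: "'a list" assume h: "h \<noteq> [] \<and> own (last h) = i"
    show "(last h, \<tau> h) \<in> E"
    proof (cases "length h < length hw \<and> h = take (length h) hw")
      case True
      then obtain k where k: "length h = Suc k" using h by (cases "length h") auto
      have "last h = hw ! k" using True k by (metis last_conv_nth h diff_Suc_1 nth_take lessI)
      moreover have "(hw ! k, hw ! Suc k) \<in> E" using hist True k unfolding is_history_def by auto
      ultimately show ?thesis using True k by (simp add: \<tau>_def)
    next
      case False
      then show ?thesis using str h unfolding \<tau>_def is_strategy_def by auto
    qed
  qed
  show "\<tau> h = \<tau>0 h" if "length hw \<le> length h" for h
    using that by (simp add: \<tau>_def)
  define \<rho> where "\<rho> = outcome own (\<sigma>(i := \<tau>)) v"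
  have "map \<rho> [0..<Suc k] = take (Suc k) hw" if "Suc k \<le> length hw" for k
    using that
  proof (induction k)
    case 0
    have "hw ! 0 = v" using hist unfolding is_history_def by (metis hd_conv_nth)
    moreover have "take (Suc 0) hw = [hw ! 0]" using 0 by (cases hw) auto
    ultimately show ?case by (simp add: \<rho>_def outcome_0)
  next
    case (Suc k)
    then have IH: "map \<rho> [0..<Suc k] = take (Suc k) hw" by simp
    have "\<rho> k = hw ! k"
      using arg_cong[OF IH, of "\<lambda>l. l ! k"] Suc.prems by (simp add: nth_map nth_upt del: upt_Suc)
    have "\<rho> (Suc k) = (\<sigma>(i := \<tau>)) (own (hw ! k)) (take (Suc k) hw)"
      using IH \<open>\<rho> k = hw ! k\<close> by (simp add: \<rho>_def outcome_Suc del: upt_Suc)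
    also have "\<dots> = hw ! Suc k"
      using comp Suc.prems unfolding compatible_minus_def by (simp add: \<tau>_def)
    finally have "\<rho> (Suc k) = hw ! Suc k" .
    then have "map \<rho> [0..<Suc (Suc k)] = take (Suc k) hw @ [hw ! Suc k]" using IH by simp
    also have "\<dots> = take (Suc (Suc k)) hw" using Suc.prems by (simp only: take_Suc_conv_app_nth)
    finally show ?case .
  qed
  then show "map \<rho> [0..<length hw] = hw"
    using hist unfolding is_history_def by (metis Suc_pred length_greater_0_conv order_refl take_all)
qed

lemma lam_consistent_suffix_iff:
  assumes "\<And>j u w. \<bar>wt j u w\<bar> \<le> B"
  shows "lam_consistent own wt lam (\<lambda>k. \<rho> (N + k)) \<longleftrightarrow>
    (\<forall>m\<ge>N. lam (\<rho> m) \<le> mean_payoff (wt (own (\<rho> m))) \<rho>)"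
proof -
  have "mean_payoff (wt j) (\<lambda>k. \<rho> (m + k)) = mean_payoff (wt j) \<rho>" for j m
    by (rule mean_payoff_shift) (rule assms)
  then have "lam_consistent own wt lam (\<lambda>k. \<rho> (N + k)) \<longleftrightarrow>
      (\<forall>n. lam (\<rho> (N + n)) \<le> mean_payoff (wt (own (\<rho> (N + n)))) \<rho>)"
    by (simp add: lam_consistent_def add.assoc[symmetric])
  also have "\<dots> \<longleftrightarrow> (\<forall>m\<ge>N. lam (\<rho> m) \<le> mean_payoff (wt (own (\<rho> m))) \<rho>)"
    by (metis le_add1 le_add_diff_inverse)
  finally show ?thesis .
qed

section \<open>Plays of the negotiation game\<close>

fun cvertex :: "'v cstate \<Rightarrow> 'v" where
  "cvertex (PSt v M) = v"
| "cvertex (CSt u v M) = u"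

fun cproposal :: "'v cstate \<Rightarrow> 'v" where
  "cproposal (PSt v M) = v"
| "cproposal (CSt u v M) = v"

fun cmemory :: "'v cstate \<Rightarrow> 'v set" where
  "cmemory (PSt v M) = M"
| "cmemory (CSt u v M) = M"

fun cmove :: "'v cstate \<Rightarrow> 'v \<Rightarrow> 'v cstate" where
  "cmove (CSt u v M) w = (if w = v then PSt w (M \<union> {w}) else PSt w {w})"
| "cmove (PSt v M) w = PSt w {w}"

definition cproj :: "'v cstate list \<Rightarrow> 'v list" where
  "cproj H = map cvertex (filter is_P H)"

lemma chist_eq_map_coutcome: "chist tP tC s n = map (coutcome tP tC s) [0..<Suc n]"
proof (induction n)
  case 0
  then show ?case by (simp add: coutcome_def)
next
  case (Suc n)
  have "chist tP tC s (Suc n) = chist tP tC s n @ [coutcome tP tC s (Suc n)]"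
    by (simp add: coutcome_def Let_def)
  then show ?case using Suc by simp
qed

lemma coutcome_Suc:
  "coutcome tP tC s (Suc n) =
     (let H = map (coutcome tP tC s) [0..<Suc n] in if is_P (last H) then tP H else tC H)"
proof -
  have "coutcome tP tC s (Suc n) = (let H = chist tP tC s n in if is_P (last H) then tP H else tC H)"
    by (simp add: coutcome_def Let_def)
  then show ?thesis by (simp only: chist_eq_map_coutcome)
qed

locale nego_play =
  fixes E :: "('v \<times> 'v) set" and own :: "'v \<Rightarrow> 'p" and i :: 'p
    and tP tC :: "'v cstate list \<Rightarrow> 'v cstate" and v0 :: 'v
  assumes prover: "prover_strategy E own i tP"
    and challenger: "challenger_strategy E own i tC"
begin

definition eta :: "nat \<Rightarrow> 'v cstate" where
  "eta = coutcome tP tC (PSt v0 {v0})"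

definition rho :: "nat \<Rightarrow> 'v" where
  "rho n = cvertex (eta (2*n))"

definition proposal :: "nat \<Rightarrow> 'v" where
  "proposal n = cproposal (eta (Suc (2*n)))"

definition memory :: "nat \<Rightarrow> 'v set" where
  "memory n = cmemory (eta (2*n))"

lemma eta_0: "eta 0 = PSt v0 {v0}"
  by (simp add: eta_def coutcome_def)

lemma eta_Suc:
  "eta (Suc n) = (let H = map eta [0..<Suc n] in if is_P (last H) then tP H else tC H)"
  unfolding eta_def by (rule coutcome_Suc)

lemma eta_step: "ctrans E own i (eta n) (eta (Suc n))"
proof -
  have last: "last (map eta [0..<Suc n]) = eta n" by simp
  show ?thesis
  proof (cases "is_P (eta n)")
    case True
    then show ?thesis
      using prover[unfolded prover_strategy_def, rule_format, of "map eta [0..<Suc n]"] eta_Suc[of n]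
      by (simp only: last Let_def if_True) simp
  next
    case False
    then show ?thesis
      using challenger[unfolded challenger_strategy_def, rule_format, of "map eta [0..<Suc n]"] eta_Suc[of n]
      by (simp only: last Let_def if_False) simp
  qed
qed

lemma eta_even_is_P: "is_P (eta (2*n))"
proof (induction n)
  case 0
  then show ?case by (simp add: eta_0)
next
  case (Suc n)
  then obtain v M where "eta (2*n) = PSt v M" by (cases "eta (2*n)") auto
  then obtain w where "eta (Suc (2*n)) = CSt v w M" using eta_step[of "2*n"] by auto
  then show ?case using eta_step[of "Suc (2*n)"] by auto
qed

lemma eta_round:
  shows eta_even: "eta (2*n) = PSt (rho n) (memory n)"
    and eta_odd: "eta (Suc (2*n)) = CSt (rho n) (proposal n) (memory n)"
    and proposal_edge: "(rho n, proposal n) \<in> E"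
    and eta_even_Suc: "eta (2 * Suc n) = cmove (CSt (rho n) (proposal n) (memory n)) (rho (Suc n))"
    and deviation_by_i: "rho (Suc n) \<noteq> proposal n \<Longrightarrow> own (rho n) = i \<and> (rho n, rho (Suc n)) \<in> E"
proof -
  obtain v M where even: "eta (2*n) = PSt v M"
    using eta_even_is_P[of n] by (cases "eta (2*n)") auto
  then obtain w where odd: "eta (Suc (2*n)) = CSt v w M" and "(v, w) \<in> E"
    using eta_step[of "2*n"] by auto
  then show "eta (2*n) = PSt (rho n) (memory n)" "eta (Suc (2*n)) = CSt (rho n) (proposal n) (memory n)"
    "(rho n, proposal n) \<in> E"
    using even by (simp_all add: rho_def proposal_def memory_def)
  have "ctrans E own i (CSt v w M) (eta (2 * Suc n))"
    using eta_step[of "Suc (2*n)"] odd by simp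
  moreover have "rho (Suc n) = cvertex (eta (2 * Suc n))" by (simp add: rho_def)
  ultimately show "eta (2 * Suc n) = cmove (CSt (rho n) (proposal n) (memory n)) (rho (Suc n))"
    "rho (Suc n) \<noteq> proposal n \<Longrightarrow> own (rho n) = i \<and> (rho n, rho (Suc n)) \<in> E"
    using even odd by (auto simp: rho_def proposal_def memory_def)
qed

lemma rho_0: "rho 0 = v0" and memory_0: "memory 0 = {v0}"
  by (simp_all add: rho_def memory_def eta_0)

lemma rho_edge: "(rho n, rho (Suc n)) \<in> E"
  using proposal_edge[of n] deviation_by_i[of n] by metis

lemma rho_Suc_eq_proposal: "own (rho n) \<noteq> i \<Longrightarrow> rho (Suc n) = proposal n"
  using deviation_by_i by blast

lemma memory_Suc:
  "memory (Suc n) = (if rho (Suc n) = proposal n then memory n \<union> {rho (Suc n)} else {rho (Suc n)})"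
  using eta_even_Suc[of n] eta_even[of "Suc n"] by auto

lemma finite_memory: "finite (memory n)"
  by (induction n) (simp_all add: memory_0 memory_Suc)

lemma cproj_eta_even: "cproj (map eta [0..<Suc (2*n)]) = map rho [0..<Suc n]"
proof (induction n)
  case 0
  then show ?case by (simp add: cproj_def eta_0 rho_0)
next
  case (Suc n)
  have "map eta [0..<Suc (2 * Suc n)] = map eta [0..<Suc (2*n)] @ [eta (Suc (2*n)), eta (2 * Suc n)]"
    by (simp add: numeral_2_eq_2)
  then show ?case
    using Suc eta_odd[of n] eta_even[of n] eta_even[of "Suc n"] by (simp add: cproj_def)
qed

lemma cproj_eta_odd: "cproj (map eta [0..<Suc (Suc (2*n))]) = map rho [0..<Suc n]"
proof -
  have "map eta [0..<Suc (Suc (2*n))] = map eta [0..<Suc (2*n)] @ [eta (Suc (2*n))]" by simp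
  then show ?thesis using cproj_eta_even[of n] eta_odd[of n] by (simp add: cproj_def del: upt_Suc)
qed

lemma eta_odd_eq_tP: "eta (Suc (2*n)) = tP (map eta [0..<Suc (2*n)])"
  using eta_Suc[of "2*n"] eta_even_is_P[of n] by (simp add: Let_def)

lemma eta_even_Suc_eq_tC: "eta (2 * Suc n) = tC (map eta [0..<Suc (Suc (2*n))])"
  using eta_Suc[of "Suc (2*n)"] eta_odd[of n] by (simp add: Let_def)

lemma finite_deviations_iff:
  "finite {k. is_dev (eta k) (eta (Suc k))} \<longleftrightarrow> finite {n. rho (Suc n) \<noteq> proposal n}"
proof -
  have even: "\<not> is_dev (eta (2*n)) (eta (Suc (2*n)))" for n
    using eta_even[of n] eta_odd[of n] by simp
  have odd: "is_dev (eta (Suc (2*n))) (eta (Suc (Suc (2*n)))) \<longleftrightarrow> rho (Suc n) \<noteq> proposal n" for n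
    using eta_odd[of n] eta_even[of "Suc n"] by simp
  have "{k. is_dev (eta k) (eta (Suc k))} = (\<lambda>n. Suc (2*n)) ` {n. rho (Suc n) \<noteq> proposal n}"
  proof (intro set_eqI iffI)
    fix k assume k: "k \<in> {k. is_dev (eta k) (eta (Suc k))}"
    have "odd k"
    proof
      assume "even k"
      then obtain n where "k = 2*n" by blast
      then show False using k even[of n] by simp
    qed
    then obtain n where "k = Suc (2*n)" by (auto elim: oddE)
    then show "k \<in> (\<lambda>n. Suc (2*n)) ` {n. rho (Suc n) \<noteq> proposal n}" using k odd by auto
  next
    fix k assume "k \<in> (\<lambda>n. Suc (2*n)) ` {n. rho (Suc n) \<noteq> proposal n}"
    then show "k \<in> {k. is_dev (eta k) (eta (Suc k))}" using odd by auto
  qed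
  moreover have "inj_on (\<lambda>n::nat. Suc (2*n)) A" for A by (auto simp: inj_on_def)
  ultimately show ?thesis by (simp add: finite_image_iff)
qed

lemma memory_settles:
  assumes "\<forall>n\<ge>N. rho (Suc n) = proposal n"
  shows "\<exists>N0\<le>N. (\<forall>n\<ge>N0. rho (Suc n) = proposal n) \<and> (\<forall>n\<ge>N0. memory n = rho ` {N0..n})"
  using assms
proof (induction N)
  case 0
  have "memory n = rho ` {0..n}" for n
    by (induction n) (use 0 in \<open>auto simp: memory_0 rho_0 memory_Suc atLeast0_atMost_Suc\<close>)
  then show ?case using 0 by auto
next
  case (Suc N)
  show ?case
  proof (cases "rho (Suc N) = proposal N")
    case True
    then have "\<forall>n\<ge>N. rho (Suc n) = proposal n" using Suc.prems by (metis le_antisym not_less_eq_eq)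
    then show ?thesis using Suc.IH by (meson le_SucI)
  next
    case False
    have "memory n = rho ` {Suc N..n}" if "n \<ge> Suc N" for n
      using that
    proof (induction n rule: dec_induct)
      case base
      then show ?case using memory_Suc[of N] False by simp
    next
      case (step n)
      then show ?case using memory_Suc[of n] Suc.prems by (auto simp: atLeastAtMostSuc_conv)
    qed
    then show ?thesis using Suc.prems by auto
  qed
qed

end

section \<open>Strategies of Prover and Challenger\<close>

lemma last_cproj:
  assumes "H \<noteq> []" "is_P (last H)"
  shows "cproj H \<noteq> [] \<and> last (cproj H) = cvertex (last H)"
proof -
  have "H = butlast H @ [last H]" using assms(1) by simp
  then have "filter is_P H = filter is_P (butlast H) @ [last H]"
    using assms(2) by (metis filter.simps filter_append)
  then show ?thesis by (simp add: cproj_def)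
qed

definition prover_of_profile ::
    "('v \<Rightarrow> 'p) \<Rightarrow> ('p \<Rightarrow> 'v list \<Rightarrow> 'v) \<Rightarrow> 'v cstate list \<Rightarrow> 'v cstate" where
  "prover_of_profile own \<sigma> H = (case last H of
     PSt u M \<Rightarrow> CSt u (\<sigma> (own u) (cproj H)) M
   | CSt u v M \<Rightarrow> CSt u v M)"

lemma prover_strategy_prover_of_profile:
  fixes E :: "('v \<times> 'v) set" and own :: "'v \<Rightarrow> 'p"
  assumes "\<And>j. is_strategy E own j (\<sigma> j)"
  shows "prover_strategy E own i (prover_of_profile own \<sigma>)"
  unfolding prover_strategy_def
proof (intro allI impI)
  fix H :: "'v cstate list" assume H: "H \<noteq> [] \<and> is_P (last H)"
  then obtain u M where last: "last H = PSt u M" by (cases "last H") auto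
  then have "cproj H \<noteq> [] \<and> last (cproj H) = u" using last_cproj[of H] H by simp
  then have "(u, \<sigma> (own u) (cproj H)) \<in> E"
    using assms[of "own u"] unfolding is_strategy_def by metis
  then show "ctrans E own i (last H) (prover_of_profile own \<sigma> H)"
    using last by (simp add: prover_of_profile_def)
qed

text \<open>The negotiation history, Prover playing \<open>tP\<close>, whose projection is the history \<open>h\<close>:
  Challenger accepts a proposal exactly when \<open>h\<close> moves to the proposed vertex.\<close>

definition lift_history :: "('v cstate list \<Rightarrow> 'v cstate) \<Rightarrow> 'v list \<Rightarrow> 'v cstate list" where
  "lift_history tP h = foldl (\<lambda>H w. H @ [tP H, cmove (tP H) w]) [PSt (hd h) {hd h}] (tl h)"

lemma lift_history_single: "lift_history tP [v] = [PSt v {v}]"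
  by (simp add: lift_history_def)

lemma lift_history_snoc:
  "h \<noteq> [] \<Longrightarrow> lift_history tP (h @ [w]) =
     lift_history tP h @ [tP (lift_history tP h), cmove (tP (lift_history tP h)) w]"
  by (cases h) (simp_all add: lift_history_def)

lemma last_lift_history: "h \<noteq> [] \<Longrightarrow> \<exists>M. last (lift_history tP h) = PSt (last h) M"
proof (induction h rule: rev_induct)
  case (snoc w h)
  show ?case
  proof (cases "h = []")
    case True
    then show ?thesis by (simp add: lift_history_single)
  next
    case False
    then show ?thesis by (cases "tP (lift_history tP h)") (simp_all add: lift_history_snoc)
  qed
qed simp

lemma lift_history_ne: "lift_history tP h \<noteq> []"
proof -
  have "H \<noteq> [] \<Longrightarrow> foldl (\<lambda>H w. H @ [tP H, cmove (tP H) w]) H ws \<noteq> []" for H ws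
    by (induction ws arbitrary: H) auto
  then show ?thesis by (simp add: lift_history_def)
qed

definition profile_of_prover :: "('v cstate list \<Rightarrow> 'v cstate) \<Rightarrow> 'p \<Rightarrow> 'v list \<Rightarrow> 'v" where
  "profile_of_prover tP j h = cproposal (tP (lift_history tP h))"

lemma is_strategy_profile_of_prover:
  assumes "prover_strategy E own i tP"
  shows "is_strategy E own j (profile_of_prover tP j)"
  unfolding is_strategy_def
proof (intro allI impI)
  fix h assume h: "h \<noteq> [] \<and> own (last h) = j"
  obtain M where last: "last (lift_history tP h) = PSt (last h) M"
    using last_lift_history h by blast
  have "ctrans E own i (last (lift_history tP h)) (tP (lift_history tP h))"
    using assms lift_history_ne[of tP h] last unfolding prover_strategy_def by (metis is_P.simps(1))
  then show "(last h, profile_of_prover tP j h) \<in> E"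
    using last by (auto simp: profile_of_prover_def)
qed

definition challenger_of_strategy :: "('v \<times> 'v) set \<Rightarrow> ('v \<Rightarrow> 'p) \<Rightarrow> 'p \<Rightarrow> ('v list \<Rightarrow> 'v)
      \<Rightarrow> 'v cstate list \<Rightarrow> 'v cstate" where
  "challenger_of_strategy E own i \<tau> H = (case last H of
     CSt u v M \<Rightarrow>
       (if own u = i \<and> (u, \<tau> (cproj H)) \<in> E \<and> \<tau> (cproj H) \<noteq> v
        then PSt (\<tau> (cproj H)) {\<tau> (cproj H)} else PSt v (M \<union> {v}))
   | PSt v M \<Rightarrow> PSt v M)"

lemma challenger_strategy_challenger_of_strategy:
  fixes E :: "('v \<times> 'v) set" and own :: "'v \<Rightarrow> 'p"
  shows "challenger_strategy E own i (challenger_of_strategy E own i \<tau>)"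
  unfolding challenger_strategy_def
proof (intro allI impI)
  fix H :: "'v cstate list" assume "H \<noteq> [] \<and> \<not> is_P (last H)"
  then obtain u v M where "last H = CSt u v M" by (cases "last H") auto
  then show "ctrans E own i (last H) (challenger_of_strategy E own i \<tau> H)"
    by (auto simp: challenger_of_strategy_def)
qed

context nego_play
begin

lemma proposal_prover_of_profile:
  "tP = prover_of_profile own \<sigma> \<Longrightarrow> proposal n = \<sigma> (own (rho n)) (map rho [0..<Suc n])"
  using eta_odd_eq_tP[of n] eta_odd[of n] eta_even[of n] cproj_eta_even[of n]
    last_map[of "[0..<Suc (2*n)]" eta]
  by (simp add: prover_of_profile_def del: upt_Suc)

lemma lift_history_rho: "lift_history tP (map rho [0..<Suc n]) = map eta [0..<Suc (2*n)]"
proof (induction n)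
  case 0
  then show ?case by (simp add: eta_0 rho_0 lift_history_single)
next
  case (Suc n)
  have "map eta [0..<Suc (2 * Suc n)] = map eta [0..<Suc (2*n)] @ [eta (Suc (2*n)), eta (2 * Suc n)]"
    by (simp add: numeral_2_eq_2)
  also have "\<dots> = lift_history tP (map rho [0..<Suc n] @ [rho (Suc n)])"
    using Suc eta_odd_eq_tP[of n] eta_odd[of n] eta_even_Suc[of n]
    by (simp add: lift_history_snoc del: upt_Suc)
  finally show ?case by simp
qed

lemma proposal_profile_of_prover: "proposal n = profile_of_prover tP j (map rho [0..<Suc n])"
proof -
  have "tP (lift_history tP (map rho [0..<Suc n])) = CSt (rho n) (proposal n) (memory n)"
    using eta_odd_eq_tP[of n] eta_odd[of n] lift_history_rho[of n] by (simp del: upt_Suc)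
  then show ?thesis by (simp add: profile_of_prover_def)
qed

lemma rho_Suc_challenger_of_strategy:
  assumes "tC = challenger_of_strategy E own i \<tau>" "is_strategy E own i \<tau>" "own (rho n) = i"
  shows "rho (Suc n) = \<tau> (map rho [0..<Suc n])"
proof -
  have "map rho [0..<Suc n] \<noteq> [] \<and> last (map rho [0..<Suc n]) = rho n" by simp
  then have "(rho n, \<tau> (map rho [0..<Suc n])) \<in> E"
    using assms(2,3) unfolding is_strategy_def by metis
  then have "eta (2 * Suc n) =
      (if \<tau> (map rho [0..<Suc n]) \<noteq> proposal n then PSt (\<tau> (map rho [0..<Suc n])) {\<tau> (map rho [0..<Suc n])}
       else PSt (proposal n) (memory n \<union> {proposal n}))"
    using eta_even_Suc_eq_tC[of n] last_map[of "[0..<Suc (Suc (2*n))]" eta] eta_odd[of n]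
      cproj_eta_odd[of n] assms(1,3)
    by (simp add: challenger_of_strategy_def del: upt_Suc)
  then show ?thesis by (auto simp: rho_def split: if_splits)
qed

lemma rho_Suc_profile_of_prover:
  assumes "tC = challenger_of_strategy E own i \<tau>" "is_strategy E own i \<tau>"
  shows "rho (Suc n) = ((profile_of_prover tP)(i := \<tau>)) (own (rho n)) (map rho [0..<Suc n])"
  using rho_Suc_challenger_of_strategy[OF assms] rho_Suc_eq_proposal[of n]
    proposal_profile_of_prover[of n "own (rho n)"]
  by (cases "own (rho n) = i") (simp_all del: upt_Suc)

lemma outcome_profile_of_prover:
  assumes "tC = challenger_of_strategy E own i \<tau>" "is_strategy E own i \<tau>"
  shows "outcome own ((profile_of_prover tP)(i := \<tau>)) v0 = rho"
  by (rule outcome_eqI) (simp_all add: rho_0 rho_Suc_profile_of_prover[OF assms])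

lemma rho_Suc_prover_of_profile:
  assumes "tP = prover_of_profile own \<sigma>" "own (rho n) \<noteq> i"
  shows "rho (Suc n) = \<sigma> (own (rho n)) (map rho [0..<Suc n])"
  using proposal_prover_of_profile[OF assms(1)] rho_Suc_eq_proposal[OF assms(2)] by simp

end

section \<open>Challenger's outcome\<close>

definition excess_wt :: "('v \<Rightarrow> 'p) \<Rightarrow> ('p \<Rightarrow> 'v \<Rightarrow> 'v \<Rightarrow> real) \<Rightarrow> ('v \<Rightarrow> ereal) \<Rightarrow> 'p
      \<Rightarrow> 'v set \<Rightarrow> 'v \<Rightarrow> 'v \<Rightarrow> real" where
  "excess_wt own wt lam j M u w = (let X = M \<inter> {x. own x = j} in
     if X = {} \<or> Max (lam ` X) = -\<infinity> then 0 else wt j u w - real_of_ereal (Max (lam ` X)))"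

lemma abs_excess_wt_le:
  assumes "\<And>u w. \<bar>wt j u w\<bar> \<le> B" "\<And>v. \<bar>real_of_ereal (lam v)\<bar> \<le> L" "finite M"
  shows "\<bar>excess_wt own wt lam j M u w\<bar> \<le> B + L"
proof (cases "M \<inter> {x. own x = j} = {} \<or> Max (lam ` (M \<inter> {x. own x = j})) = -\<infinity>")
  case True
  have "0 \<le> B + L" using assms(1)[of u w] assms(2)[of u] by (meson abs_ge_zero add_nonneg_nonneg order_trans)
  with True show ?thesis by (auto simp: excess_wt_def Let_def)
next
  case False
  then have "Max (lam ` (M \<inter> {x. own x = j})) \<in> lam ` (M \<inter> {x. own x = j})"
    using assms(3) by (intro Max_in) auto
  then obtain x where "Max (lam ` (M \<inter> {x. own x = j})) = lam x" by auto
  then have "excess_wt own wt lam j M u w = wt j u w - real_of_ereal (lam x)"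
    using False by (simp add: excess_wt_def Let_def)
  then show ?thesis using assms(1)[of u w] assms(2)[of x] by linarith
qed

locale weighted_nego_play = nego_play E own i tP tC v0
  for E :: "('v::finite \<times> 'v) set" and own :: "'v \<Rightarrow> 'p" and i tP tC v0 +
  fixes wt :: "'p \<Rightarrow> 'v \<Rightarrow> 'v \<Rightarrow> real" and lam :: "'v \<Rightarrow> ereal" and B :: real
  assumes wt_bounded: "\<And>j u w. \<bar>wt j u w\<bar> \<le> B"
    and lam_not_infinity: "\<And>v. lam v \<noteq> \<infinity>"
begin

lemma hatwt_eta_even: "hatwt own wt lam i d (eta (2*n)) (eta (Suc (2*n))) = 0"
  using eta_even[of n] eta_odd[of n] by (cases d) auto

lemma hatwt_None_eta_odd:
  "hatwt own wt lam i None (eta (Suc (2*n))) (eta (Suc (Suc (2*n)))) = 2 * wt i (rho n) (rho (Suc n))"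
  using eta_odd[of n] eta_even_Suc[of n] by simp

lemma hatwt_Some_eta_odd:
  "hatwt own wt lam i (Some j) (eta (Suc (2*n))) (eta (Suc (Suc (2*n)))) =
     2 * excess_wt own wt lam j (memory n) (rho n) (rho (Suc n))"
  using eta_odd[of n] eta_even_Suc[of n] by (simp add: excess_wt_def Let_def)

lemma abs_excess_wt_memory_le: "\<exists>C. \<forall>n. \<bar>excess_wt own wt lam j (memory n) (rho n) (rho (Suc n))\<bar> \<le> C"
proof -
  define L where "L = Max (range (\<lambda>v. \<bar>real_of_ereal (lam v)\<bar>))"
  have "\<bar>real_of_ereal (lam v)\<bar> \<le> L" for v
    unfolding L_def by (rule Max_ge) auto
  then have "\<bar>excess_wt own wt lam j (memory n) (rho n) (rho (Suc n))\<bar> \<le> B + L" for n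
    by (intro abs_excess_wt_le wt_bounded finite_memory)
  then show ?thesis by blast
qed

lemma mean_payoff_hatwt_None: "mean_payoff (hatwt own wt lam i None) eta = mean_payoff (wt i) rho"
  unfolding mean_payoff_eq_liminf_avg
  by (rule liminf_avg_interleave_zeros[where B=B])
    (simp_all add: hatwt_eta_even hatwt_None_eta_odd wt_bounded)

lemma mean_payoff_hatwt_Some:
  "mean_payoff (hatwt own wt lam i (Some j)) eta =
     liminf_avg (\<lambda>n. excess_wt own wt lam j (memory n) (rho n) (rho (Suc n)))"
proof -
  obtain C where "\<bar>excess_wt own wt lam j (memory n) (rho n) (rho (Suc n))\<bar> \<le> C" for n
    using abs_excess_wt_memory_le by blast
  then show ?thesis
    unfolding mean_payoff_eq_liminf_avg
    by (intro liminf_avg_interleave_zeros[where B=C]) (simp_all add: hatwt_eta_even hatwt_Some_eta_odd)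
qed

lemma liminf_avg_excess_wt_settled:
  fixes j :: 'p
  assumes settled: "\<forall>n\<ge>N0. memory n = rho ` {N0..n}"
  defines "U \<equiv> rho ` {N0..} \<inter> {x. own x = j}"
  shows "liminf_avg (\<lambda>n. excess_wt own wt lam j (memory n) (rho n) (rho (Suc n))) =
    (if U = {} \<or> Max (lam ` U) = -\<infinity> then 0 else mean_payoff (wt j) rho - Max (lam ` U))"
proof -
  define F where "F n = excess_wt own wt lam j (memory n) (rho n) (rho (Suc n))" for n
  have "finite U" by simp
  then obtain S where S: "S \<subseteq> {N0..}" "finite S" "U = rho ` S"
    using finite_subset_image[of U rho "{N0..}"] unfolding U_def by blast
  define N where "N = Max (insert N0 S)"
  have "N \<ge> N0" "S \<subseteq> {N0..N}" using S by (auto simp: N_def)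
  have memory_j: "memory n \<inter> {x. own x = j} = U" if "n \<ge> N" for n
  proof -
    have "U \<subseteq> rho ` {N0..n}" using S \<open>S \<subseteq> {N0..N}\<close> that by fastforce
    then show ?thesis using settled \<open>N \<ge> N0\<close> that unfolding U_def by auto
  qed
  obtain C where C: "\<bar>F n\<bar> \<le> C" for n
    using abs_excess_wt_memory_le unfolding F_def by blast
  show ?thesis
  proof (cases "U = {} \<or> Max (lam ` U) = -\<infinity>")
    case True
    have "F n = 0" if "n \<ge> N" for n
      using True memory_j[OF that] by (auto simp: F_def excess_wt_def Let_def)
    then have "liminf_avg F = liminf_avg (\<lambda>n. 0)"
      using C by (intro liminf_avg_eventually_cong[where B=C and N=N]) (auto intro: order_trans[OF abs_ge_zero])
    then show ?thesis using True by (simp add: liminf_avg_zero F_def[abs_def])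
  next
    case False
    then have "Max (lam ` U) \<in> lam ` U" using \<open>finite U\<close> by (intro Max_in) auto
    then have "Max (lam ` U) \<noteq> \<infinity>" using lam_not_infinity by (metis imageE)
    with False obtain c where c: "Max (lam ` U) = ereal c" by (cases "Max (lam ` U)") auto
    have "F n = wt j (rho n) (rho (Suc n)) - c" if "n \<ge> N" for n
      using False memory_j[OF that] c by (simp add: F_def excess_wt_def Let_def)
    then have "liminf_avg F = liminf_avg (\<lambda>n. wt j (rho n) (rho (Suc n)) - c)"
    proof (intro liminf_avg_eventually_cong[where B="max C (B + \<bar>c\<bar>)" and N=N])
      show "\<bar>wt j (rho n) (rho (Suc n)) - c\<bar> \<le> max C (B + \<bar>c\<bar>)" for n
        using wt_bounded[of j "rho n" "rho (Suc n)"] by linarith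
    qed (use C in \<open>auto intro: le_max_iff_disj[THEN iffD2]\<close>)
    also have "\<dots> = mean_payoff (wt j) rho - ereal c"
      by (simp add: liminf_avg_diff_const mean_payoff_eq_liminf_avg)
    finally show ?thesis using False c by (simp add: F_def[abs_def])
  qed
qed

lemma liminf_avg_excess_wt_nonneg_iff:
  assumes "\<forall>n\<ge>N0. memory n = rho ` {N0..n}"
  shows "0 \<le> liminf_avg (\<lambda>n. excess_wt own wt lam j (memory n) (rho n) (rho (Suc n))) \<longleftrightarrow>
    (\<forall>m\<ge>N0. own (rho m) = j \<longrightarrow> lam (rho m) \<le> mean_payoff (wt j) rho)"
proof -
  define U where "U = rho ` {N0..} \<inter> {x. own x = j}"
  have U: "x \<in> U \<longleftrightarrow> (\<exists>m\<ge>N0. own (rho m) = j \<and> x = rho m)" for x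
    by (auto simp: U_def)
  have "finite U" by simp
  show ?thesis
  proof (cases "U = {} \<or> Max (lam ` U) = -\<infinity>")
    case True
    have "lam x = -\<infinity>" if "x \<in> U" for x
    proof -
      have "lam x \<le> Max (lam ` U)" using that \<open>finite U\<close> by (simp del: Max_ge_iff)
      moreover have "Max (lam ` U) = -\<infinity>" using True that by auto
      ultimately show ?thesis by simp
    qed
    then have "lam (rho m) = -\<infinity>" if "m \<ge> N0" "own (rho m) = j" for m
      using that U by blast
    then show ?thesis
      using True liminf_avg_excess_wt_settled[OF assms, of j] unfolding U_def by auto
  next
    case False
    then have "Max (lam ` U) \<in> lam ` U" using \<open>finite U\<close> by (intro Max_in) auto
    then have "Max (lam ` U) \<noteq> \<infinity>" using lam_not_infinity by (metis imageE)
    with False obtain c where c: "Max (lam ` U) = ereal c" by (cases "Max (lam ` U)") auto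
    have "0 \<le> mean_payoff (wt j) rho - ereal c \<longleftrightarrow> ereal c \<le> mean_payoff (wt j) rho"
      by (cases "mean_payoff (wt j) rho") auto
    also have "\<dots> \<longleftrightarrow> (\<forall>x\<in>U. lam x \<le> mean_payoff (wt j) rho)"
      using False \<open>finite U\<close> by (simp flip: c)
    finally show ?thesis
      using False c liminf_avg_excess_wt_settled[OF assms, of j] U unfolding U_def by auto
  qed
qed


lemma nuC_eq_if_settled:
  assumes "\<forall>n\<ge>N0. rho (Suc n) = proposal n" "\<forall>n\<ge>N0. memory n = rho ` {N0..n}"
  shows "nuC own wt lam i eta =
    (if lam_consistent own wt lam (\<lambda>k. rho (N0 + k)) then mean_payoff (wt i) rho else \<infinity>)"
proof -
  have "{n. rho (Suc n) \<noteq> proposal n} \<subseteq> {..<N0}" using assms(1) not_le by blast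
  then have finite_dev: "finite {k. is_dev (eta k) (eta (Suc k))}"
    using finite_deviations_iff finite_subset by blast
  have "(\<exists>j. mean_payoff (hatwt own wt lam i (Some j)) eta < 0) \<longleftrightarrow>
      (\<exists>j. \<not> (\<forall>m\<ge>N0. own (rho m) = j \<longrightarrow> lam (rho m) \<le> mean_payoff (wt j) rho))"
    by (simp add: mean_payoff_hatwt_Some liminf_avg_excess_wt_nonneg_iff[OF assms(2), symmetric]
        not_le[symmetric] del: not_all)
  also have "\<dots> \<longleftrightarrow> \<not> lam_consistent own wt lam (\<lambda>k. rho (N0 + k))"
    by (auto simp: lam_consistent_suffix_iff[OF wt_bounded, where \<rho>=rho])
  finally show ?thesis using finite_dev by (simp add: nuC_def mean_payoff_hatwt_None)
qed

lemma mean_payoff_le_nuC: "mean_payoff (wt i) rho \<le> nuC own wt lam i eta"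
  by (simp add: nuC_def mean_payoff_hatwt_None)

lemma nuC_eq_mean_payoff_unless_inconsistent:
  assumes "nuC own wt lam i eta \<noteq> mean_payoff (wt i) rho"
  obtains N where "\<forall>n\<ge>N. rho (Suc n) = proposal n" "\<not> lam_consistent own wt lam (\<lambda>k. rho (N + k))"
proof -
  have "finite {k. is_dev (eta k) (eta (Suc k))}"
    using assms by (auto simp: nuC_def mean_payoff_hatwt_None split: if_splits)
  then obtain N where "{n. rho (Suc n) \<noteq> proposal n} \<subseteq> {..<N}"
    using finite_deviations_iff finite_nat_bounded by blast
  then have "\<forall>n\<ge>N. rho (Suc n) = proposal n" by auto
  then obtain N0 where "\<forall>n\<ge>N0. rho (Suc n) = proposal n" "\<forall>n\<ge>N0. memory n = rho ` {N0..n}"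
    using memory_settles by blast
  with assms nuC_eq_if_settled show ?thesis using that by fastforce
qed

lemma nuC_eq_infinity_if_inconsistent:
  assumes "\<forall>n\<ge>N. rho (Suc n) = proposal n" "\<not> lam_consistent own wt lam (\<lambda>k. rho (N + k))"
  shows "nuC own wt lam i eta = \<infinity>"
proof -
  obtain N0 where "N0 \<le> N" "\<forall>n\<ge>N0. rho (Suc n) = proposal n" "\<forall>n\<ge>N0. memory n = rho ` {N0..n}"
    using memory_settles[OF assms(1)] by blast
  moreover have "\<not> lam_consistent own wt lam (\<lambda>k. rho (N0 + k))"
    using assms(2) \<open>N0 \<le> N\<close> order_trans
    unfolding lam_consistent_suffix_iff[OF wt_bounded, where \<rho>=rho] by blast
  ultimately show ?thesis using nuC_eq_if_settled by simp
qed


lemma nuC_prover_of_rational_profile: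
  assumes tP: "tP = prover_of_profile own (\<sigma>(i := \<tau>0))"
    and consistent: "\<And>h w. is_history E v0 (h @ [w]) \<and> compatible_minus own i \<sigma> (h @ [w]) \<Longrightarrow>
      lam_consistent own wt lam (outcome own (\<lambda>j h'. (\<sigma>(i := \<tau>0)) j (h @ h')) w)"
  shows "nuC own wt lam i eta = mean_payoff (wt i) rho"
proof (rule ccontr)
  assume "nuC own wt lam i eta \<noteq> mean_payoff (wt i) rho"
  then obtain N where "\<forall>n\<ge>N. rho (Suc n) = proposal n"
    and inconsistent: "\<not> lam_consistent own wt lam (\<lambda>k. rho (N + k))"
    by (rule nuC_eq_mean_payoff_unless_inconsistent)
  then have "outcome own (\<lambda>j h. (\<sigma>(i := \<tau>0)) j (map rho [0..<N] @ h)) (rho N) = (\<lambda>k. rho (N + k))"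
    by (intro outcome_suffix) (simp add: proposal_prover_of_profile[OF tP])
  moreover have "is_history E v0 (map rho [0..<N] @ [rho N])"
    using is_history_map[OF rho_0 rho_edge, of N] by simp
  moreover have "compatible_minus own i \<sigma> (map rho [0..<N] @ [rho N])"
    using compatible_minus_map[where \<rho>=rho and own=own and i=i and \<sigma>=\<sigma> and N=N]
      rho_Suc_prover_of_profile[OF tP] by simp
  ultimately show False using consistent inconsistent by metis
qed

lemma nuC_challenger_of_inconsistent_history:
  assumes tC: "tC = challenger_of_strategy E own i \<tau>" and \<tau>: "is_strategy E own i \<tau>"
    and late: "\<And>h'. length (h @ [w]) \<le> length h' \<Longrightarrow> \<tau> h' = profile_of_prover tP i h'"
    and prefix: "map rho [0..<length (h @ [w])] = h @ [w]"
    and inconsistent: "\<not> lam_consistent own wt lam (outcome own (\<lambda>j h'. profile_of_prover tP j (h @ h')) w)"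
  shows "nuC own wt lam i eta = \<infinity>"
proof -
  define N where "N = length h"
  have "map rho [0..<N] = h" "rho N = w"
    using prefix by (simp_all add: N_def)
  have follows: "rho (Suc n) = profile_of_prover tP (own (rho n)) (map rho [0..<Suc n])"
    if "n \<ge> N" for n
    using rho_Suc_profile_of_prover[OF tC \<tau>, of n] late[of "map rho [0..<Suc n]"] that
    by (cases "own (rho n) = i") (simp_all add: N_def del: upt_Suc)
  then have "\<forall>n\<ge>N. rho (Suc n) = proposal n"
    using proposal_profile_of_prover by metis
  moreover have "\<not> lam_consistent own wt lam (\<lambda>k. rho (N + k))"
    using inconsistent outcome_suffix[where \<rho>=rho and own=own and N=N, OF follows]
      \<open>map rho [0..<N] = h\<close> \<open>rho N = w\<close> by simp
  ultimately show ?thesis by (rule nuC_eq_infinity_if_inconsistent)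
qed

end

section \<open>The value of the negotiation game\<close>

lemma nego_value_le_rational_value:
  fixes E :: "('v::finite \<times> 'v) set" and own :: "'v \<Rightarrow> 'p"
    and wt :: "'p \<Rightarrow> 'v \<Rightarrow> 'v \<Rightarrow> real" and lam :: "'v \<Rightarrow> ereal"
  assumes wt_bounded: "\<And>j u w. \<bar>wt j u w\<bar> \<le> B" and lam_not_infinity: "\<And>v. lam v \<noteq> \<infinity>"
  shows "(INF tP \<in> {t. prover_strategy E own i t}. SUP tC \<in> {t. challenger_strategy E own i t}.
            nuC own wt lam i (coutcome tP tC (PSt v0 {v0})))
       \<le> (INF \<sigma> \<in> lamRat E own wt lam i v0. SUP \<tau> \<in> {t. is_strategy E own i t}.
            mean_payoff (wt i) (outcome own (\<sigma>(i := \<tau>)) v0))"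
proof (rule INF_greatest)
  fix \<sigma> assume "\<sigma> \<in> lamRat E own wt lam i v0"
  then obtain \<tau>0 where others: "\<And>j. j \<noteq> i \<Longrightarrow> is_strategy E own j (\<sigma> j)"
    and strategy_\<tau>0: "is_strategy E own i \<tau>0"
    and consistent: "\<And>h w. is_history E v0 (h @ [w]) \<and> compatible_minus own i \<sigma> (h @ [w]) \<Longrightarrow>
      lam_consistent own wt lam (outcome own (\<lambda>j h'. (\<sigma>(i := \<tau>0)) j (h @ h')) w)"
    unfolding lamRat_def by blast
  define tP where "tP = prover_of_profile own (\<sigma>(i := \<tau>0))"
  have tP: "prover_strategy E own i tP"
    unfolding tP_def by (rule prover_strategy_prover_of_profile) (use others strategy_\<tau>0 in auto)
  have "nuC own wt lam i (coutcome tP tC (PSt v0 {v0}))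
      \<le> (SUP \<tau> \<in> {t. is_strategy E own i t}. mean_payoff (wt i) (outcome own (\<sigma>(i := \<tau>)) v0))"
    if tC: "challenger_strategy E own i tC" for tC
  proof -
    interpret weighted_nego_play E own i tP tC v0 wt lam B
      using tP tC wt_bounded lam_not_infinity by unfold_locales
    have "nuC own wt lam i eta = mean_payoff (wt i) rho"
      using tP_def consistent by (rule nuC_prover_of_rational_profile)
    moreover have "rho (Suc n) = \<sigma> (own (rho n)) (map rho [0..<Suc n])" if "own (rho n) \<noteq> i" for n
      using rho_Suc_prover_of_profile[OF tP_def that] that by simp
    then obtain \<tau> where "is_strategy E own i \<tau>" "outcome own (\<sigma>(i := \<tau>)) v0 = rho"
      using strategy_realising_play[OF rho_0 rho_edge _ strategy_\<tau>0] by blast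
    ultimately show ?thesis by (auto simp: eta_def intro: SUP_upper2)
  qed
  then show "(INF tP \<in> {t. prover_strategy E own i t}. SUP tC \<in> {t. challenger_strategy E own i t}.
            nuC own wt lam i (coutcome tP tC (PSt v0 {v0})))
      \<le> (SUP \<tau> \<in> {t. is_strategy E own i t}. mean_payoff (wt i) (outcome own (\<sigma>(i := \<tau>)) v0))"
    using tP by (intro INF_lower2[of tP] SUP_least) auto
qed

lemma rational_value_le_nego_value:
  fixes E :: "('v::finite \<times> 'v) set" and own :: "'v \<Rightarrow> 'p"
    and wt :: "'p \<Rightarrow> 'v \<Rightarrow> 'v \<Rightarrow> real" and lam :: "'v \<Rightarrow> ereal"
  assumes wt_bounded: "\<And>j u w. \<bar>wt j u w\<bar> \<le> B" and lam_not_infinity: "\<And>v. lam v \<noteq> \<infinity>"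
  shows "(INF \<sigma> \<in> lamRat E own wt lam i v0. SUP \<tau> \<in> {t. is_strategy E own i t}.
            mean_payoff (wt i) (outcome own (\<sigma>(i := \<tau>)) v0))
       \<le> (INF tP \<in> {t. prover_strategy E own i t}. SUP tC \<in> {t. challenger_strategy E own i t}.
            nuC own wt lam i (coutcome tP tC (PSt v0 {v0})))"
proof (rule INF_greatest)
  fix tP assume "tP \<in> {t. prover_strategy E own i t}"
  then have tP: "prover_strategy E own i tP" by simp
  define \<sigma> :: "'p \<Rightarrow> 'v list \<Rightarrow> 'v" where "\<sigma> = profile_of_prover tP"
  have strategies: "is_strategy E own j (\<sigma> j)" for j
    unfolding \<sigma>_def by (rule is_strategy_profile_of_prover[OF tP])
  let ?SUP = "SUP tC \<in> {t. challenger_strategy E own i t}. nuC own wt lam i (coutcome tP tC (PSt v0 {v0}))"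
  have play: "weighted_nego_play E own i tP (challenger_of_strategy E own i \<tau>) wt lam B" for \<tau>
    using tP challenger_strategy_challenger_of_strategy wt_bounded lam_not_infinity
    by unfold_locales
  have nuC_le_SUP: "nuC own wt lam i (nego_play.eta tP (challenger_of_strategy E own i \<tau>) v0) \<le> ?SUP"
    for \<tau>
  proof -
    interpret weighted_nego_play E own i tP "challenger_of_strategy E own i \<tau>" v0 wt lam B
      by (rule play)
    show ?thesis
      unfolding eta_def by (rule SUP_upper) (simp add: challenger_strategy_challenger_of_strategy)
  qed
  show "(INF \<sigma> \<in> lamRat E own wt lam i v0. SUP \<tau> \<in> {t. is_strategy E own i t}.
            mean_payoff (wt i) (outcome own (\<sigma>(i := \<tau>)) v0)) \<le> ?SUP"
  proof (cases "\<sigma> \<in> lamRat E own wt lam i v0")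
    case True
    have "mean_payoff (wt i) (outcome own (\<sigma>(i := \<tau>)) v0) \<le> ?SUP"
      if "is_strategy E own i \<tau>" for \<tau>
    proof -
      interpret weighted_nego_play E own i tP "challenger_of_strategy E own i \<tau>" v0 wt lam B
        by (rule play)
      show ?thesis
        using outcome_profile_of_prover[OF refl that] mean_payoff_le_nuC nuC_le_SUP[of \<tau>]
        by (simp add: \<sigma>_def)
    qed
    then show ?thesis by (intro INF_lower2[OF True] SUP_least) auto
  next
    case False
    then have "\<not> (\<forall>h w. is_history E v0 (h @ [w]) \<and> compatible_minus own i \<sigma> (h @ [w]) \<longrightarrow>
        lam_consistent own wt lam (outcome own (\<lambda>j h'. (\<sigma>(i := \<sigma> i)) j (h @ h')) w))"
      using strategies unfolding lamRat_def by blast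
    then obtain h w where history: "is_history E v0 (h @ [w])"
      and compatible: "compatible_minus own i \<sigma> (h @ [w])"
      and inconsistent: "\<not> lam_consistent own wt lam (outcome own (\<lambda>j h'. \<sigma> j (h @ h')) w)"
      by auto
    obtain \<tau> where \<tau>: "is_strategy E own i \<tau>"
      and late: "\<And>h'. length (h @ [w]) \<le> length h' \<Longrightarrow> \<tau> h' = \<sigma> i h'"
      and prefix: "map (outcome own (\<sigma>(i := \<tau>)) v0) [0..<length (h @ [w])] = h @ [w]"
      using strategy_following_history[OF history compatible strategies] by blast
    interpret weighted_nego_play E own i tP "challenger_of_strategy E own i \<tau>" v0 wt lam B
      by (rule play)
    have "map rho [0..<length (h @ [w])] = h @ [w]"
      using prefix unfolding \<sigma>_def outcome_profile_of_prover[OF refl \<tau>] .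
    then have "nuC own wt lam i eta = \<infinity>"
      using late inconsistent unfolding \<sigma>_def
      by (intro nuC_challenger_of_inconsistent_history[OF refl \<tau>])
    then show ?thesis using nuC_le_SUP[of \<tau>] by simp
  qed
qed

theorem theorem3:
  fixes E :: "('v::finite \<times> 'v) set" and own :: "'v \<Rightarrow> 'p::finite"
    and wt :: "'p \<Rightarrow> 'v \<Rightarrow> 'v \<Rightarrow> real" and lam :: "'v \<Rightarrow> ereal"
    and i :: 'p and v0 :: 'v
  assumes "\<forall>u. \<exists>w. (u, w) \<in> E"
    and "\<forall>j u w. (u, w) \<in> E \<longrightarrow> wt j u w \<in> \<rat>"
    and "(\<forall>v. lam v \<noteq> \<infinity> \<and> lam v \<noteq> -\<infinity>) \<or> lam = (\<lambda>_. -\<infinity>)"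
  shows "(INF tP \<in> {t. prover_strategy E own i t}. SUP tC \<in> {t. challenger_strategy E own i t}.
            nuC own wt lam i (coutcome tP tC (PSt v0 {v0})))
       = (INF \<sigma> \<in> lamRat E own wt lam i v0. SUP \<tau> \<in> {t. is_strategy E own i t}.
            mean_payoff (wt i) (outcome own (\<sigma>(i := \<tau>)) v0))"
proof -
  define B where "B = Max (range (\<lambda>(j, u, w). \<bar>wt j u w\<bar>))"
  have "\<bar>wt j u w\<bar> \<le> B" for j u w
    unfolding B_def by (rule Max_ge) (auto intro: rev_image_eqI[of "(j, u, w)"])
  moreover have "lam v \<noteq> \<infinity>" for v
    using assms(3) by auto
  ultimately show ?thesis
    by (intro antisym nego_value_le_rational_value rational_value_le_nego_value)
qed

end
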